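(* Let $q>1$, $\delta:=[2(q+1)]^{1/(q-1)}$, and let $W$ be a (small) neighborhood of $0$ in $\mathbb{R}$. There are constants $C_6,C_7>0$ such that for all $a\in[1/2,1]$, all $0<\xi\leq C_6$, all $0<\eta\leq C_6$, and every $C^1$ function $r:[0,\delta]\to\mathbb{R}$ with $\sup_{t\in[0,\delta]}\big(|r(t)|+|r'(t)|\big)\leq\xi$, the map $f_{a,r}:[0,\delta]\to\mathbb{R}$, $f_{a,r}(t):=\frac{t^2}{2}-a\frac{t^{q+1}}{q+1}+r(t)$, satisfies $$t\in[0,\delta]\setminus W,\ |f'_{a,r}(t)|\leq\eta\ \Longrightarrow\ |t-a^{-1/(q-1)}|\leq C_7(\xi+\eta),$$ and $$\inf_{t\in[0,\delta]\setminus W,\ |f'_{a,r}(t)|\leq\eta}f_{a,r}(t)\geq\Big(\frac12-\frac{1}{q+1}\Big)\Big(\frac1a\Big)^{2/(q-1)}-C_7(\xi+\eta).$$ *)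

theory Defs
  imports "HOL-Analysis.Analysis"
begin

definition delta_q :: "real \<Rightarrow> real" where
  "delta_q q = (2 * (q + 1)) powr (1 / (q - 1))"

definition f_ar :: "real \<Rightarrow> real \<Rightarrow> (real \<Rightarrow> real) \<Rightarrow> real \<Rightarrow> real" where
  "f_ar q a r t = t^2 / 2 - a * t powr (q + 1) / (q + 1) + r t"

(* derivative of f_ar q a r, given a derivative r' of r *)
definition f_ar' :: "real \<Rightarrow> real \<Rightarrow> (real \<Rightarrow> real) \<Rightarrow> real \<Rightarrow> real" where
  "f_ar' q a r' t = t - a * t powr q + r' t"

end

theory Submission
  imports Defs
begin

text \<open>Let \<open>t\<^sub>0 = a powr (-1 / (q - 1))\<close>. The unperturbed derivative factors as
  \<open>t - a t^q = a t (t\<^sub>0^(q-1) - t^(q-1))\<close>, so \<open>t\<^sub>0\<close> is its only positive zero. Outside \<open>W\<close>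
  we have \<open>t \<ge> m > 0\<close>, and the mean value theorem bounds \<open>|t^(q-1) - t\<^sub>0^(q-1)|\<close> below by a
  multiple of \<open>|t - t\<^sub>0|\<close> on \<open>[m, \<delta>]\<close>. As the perturbation moves the derivative by at most
  \<open>\<xi>\<close>, every \<open>t\<close> with \<open>|f_ar' q a r' t| \<le> \<eta>\<close> lies within \<open>O(\<xi> + \<eta>)\<close> of \<open>t\<^sub>0\<close>. The value
  estimate follows since the unperturbed map is Lipschitz on \<open>[m, \<delta>]\<close>, \<open>|r| \<le> \<xi>\<close>, and its
  value at \<open>t\<^sub>0\<close> is \<open>(1/2 - 1/(q + 1)) t\<^sub>0\<^sup>2\<close>.\<close>

lemma powr_diff_lower_bound:
  fixes p m M x y :: real
  assumes "p > 0" "0 < m" "x \<in> {m..M}" "y \<in> {m..M}"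
  shows "p * min (m powr (p - 1)) (M powr (p - 1)) * \<bar>x - y\<bar> \<le> \<bar>x powr p - y powr p\<bar>"
proof -
  have "p * min (m powr (p - 1)) (M powr (p - 1)) * (y - x) \<le> y powr p - x powr p"
    if xy: "x < y" "x \<in> {m..M}" "y \<in> {m..M}" for x y
  proof -
    have "\<exists>z>x. z < y \<and> y powr p - x powr p = (y - x) * (p * z powr (p - 1))"
      using xy assms(2) by (intro MVT2) (auto intro!: has_real_derivative_powr)
    then obtain z where z: "x < z" "z < y"
      and mvt: "y powr p - x powr p = (y - x) * (p * z powr (p - 1))"
      by blast
    have "min (m powr (p - 1)) (M powr (p - 1)) \<le> z powr (p - 1)"
      using z xy assms(2) powr_mono2[of "p - 1" m z] powr_mono2'[of "p - 1" z M]
      by (cases "p \<ge> 1") auto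
    then show ?thesis
      unfolding mvt using \<open>x < y\<close> \<open>p > 0\<close> by (simp add: mult.commute mult_left_mono)
  qed
  from this[of x y] this[of y x] assms(3,4) show ?thesis
    by (cases x y rule: linorder_cases) (auto simp: abs_minus_commute)
qed

lemma has_real_derivative_f_ar:
  assumes "q + 1 \<noteq> 0" "t > 0" "(r has_real_derivative r' t) (at t within S)"
  shows "(f_ar q a r has_real_derivative f_ar' q a r' t) (at t within S)"
  unfolding f_ar_def [abs_def] f_ar'_def using assms by (auto intro!: derivative_eq_intros)

lemma f_ar_unperturbed_lipschitz:
  fixes q a m M x y :: real
  assumes "q \<ge> 0" "a \<in> {0..1}" "0 < m" "x \<in> {m..M}" "y \<in> {m..M}"
  shows "\<bar>f_ar q a (\<lambda>_. 0) x - f_ar q a (\<lambda>_. 0) y\<bar> \<le> (M + M powr q) * \<bar>x - y\<bar>"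
proof -
  have "norm (f_ar' q a (\<lambda>_. 0) t) \<le> M + M powr q" if "t \<in> {m..M}" for t
  proof -
    have "0 \<le> a * t powr q" "a * t powr q \<le> t powr q" "t powr q \<le> M powr q"
      using that assms by (auto intro: mult_left_le_one_le powr_mono2)
    then show ?thesis
      using that assms(3) powr_ge_zero[of M q]
      unfolding f_ar'_def real_norm_def abs_le_iff atLeastAtMost_iff by (intro conjI) linarith+
  qed
  then have "norm (f_ar q a (\<lambda>_. 0) x - f_ar q a (\<lambda>_. 0) y) \<le> (M + M powr q) * norm (x - y)"
    using assms
    by (intro field_differentiable_bound[where S = "{m..M}" and f' = "f_ar' q a (\<lambda>_. 0)"])
      (auto intro!: has_real_derivative_f_ar)
  then show ?thesis
    by simp
qed

lemma f_ar_unperturbed_at_critical_point: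
  fixes q a :: real
  assumes "q > 1" "a > 0"
  defines "t\<^sub>0 \<equiv> a powr (-1 / (q - 1))"
  shows "a * t\<^sub>0 powr (q - 1) = 1"
    and "f_ar q a (\<lambda>_. 0) t\<^sub>0 = (1/2 - 1/(q + 1)) * (1/a) powr (2/(q - 1))"
proof -
  have t0_pow: "t\<^sub>0 powr s = (1/a) powr (s/(q - 1))" for s
  proof -
    have "t\<^sub>0 = (1/a) powr (1/(q - 1))"
      unfolding t\<^sub>0_def using assms by (simp add: powr_minus_divide powr_divide)
    then show ?thesis
      by (simp add: powr_powr)
  qed
  show crit: "a * t\<^sub>0 powr (q - 1) = 1"
    unfolding t0_pow using assms by (simp add: powr_divide)
  have "t\<^sub>0 powr (q + 1) = t\<^sub>0 powr 2 * t\<^sub>0 powr (q - 1)"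
    by (simp add: add_ac flip: powr_add)
  with crit have "a * t\<^sub>0 powr (q + 1) = t\<^sub>0 powr 2"
    by (simp add: mult.left_commute)
  moreover have "t\<^sub>0 ^ 2 = t\<^sub>0 powr 2"
    unfolding t\<^sub>0_def using assms by (simp add: powr_realpow)
  ultimately show "f_ar q a (\<lambda>_. 0) t\<^sub>0 = (1/2 - 1/(q + 1)) * (1/a) powr (2/(q - 1))"
    unfolding f_ar_def t0_pow[of 2, symmetric] by (simp add: field_simps)
qed

lemma delta_q_pos: "delta_q q > 0" if "q > -1"
  using that by (simp add: delta_q_def)

lemma critical_point_mem:
  fixes q a :: real
  assumes "q > 1" "a \<in> {1/2..1}"
  shows "a powr (-1 / (q - 1)) \<in> {1..delta_q q}"
proof -
  have "a powr (-1 / (q - 1)) = (1/a) powr (1/(q - 1))"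
    using assms by (simp add: powr_minus_divide powr_divide)
  moreover have "1 \<le> (1/a) powr (1/(q - 1))"
    using assms by (intro ge_one_powr_ge_zero) auto
  moreover have "(1/a) powr (1/(q - 1)) \<le> (2 * (q + 1)) powr (1/(q - 1))"
  proof -
    have "1/a \<le> 2"
      using assms by (simp add: field_simps)
    then show ?thesis
      using assms by (intro powr_mono2) auto
  qed
  ultimately show ?thesis
    by (simp add: delta_q_def)
qed

lemma near_critical_point:
  fixes q a m M t \<epsilon> :: real
  assumes "q > 1" "a > 0" "0 < m" "t \<in> {m..M}" "a powr (-1 / (q - 1)) \<in> {m..M}"
    and "\<bar>t - a * t powr q\<bar> \<le> \<epsilon>"
  shows "a * m * ((q - 1) * min (m powr (q - 2)) (M powr (q - 2))) * \<bar>t - a powr (-1 / (q - 1))\<bar>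
           \<le> \<epsilon>"
proof -
  define t\<^sub>0 where "t\<^sub>0 = a powr (-1 / (q - 1))"
  have t: "0 < t" "m \<le> t"
    using assms by auto
  have "t powr q = t * t powr (q - 1)"
    using t by (simp add: powr_mult_base)
  then have "t - a * t powr q = a * t * (t\<^sub>0 powr (q - 1) - t powr (q - 1))"
    using f_ar_unperturbed_at_critical_point(1)[OF assms(1,2)] unfolding t\<^sub>0_def
    by (simp add: algebra_simps)
  then have "\<bar>t - a * t powr q\<bar> = a * t * \<bar>t powr (q - 1) - t\<^sub>0 powr (q - 1)\<bar>"
    using assms(2) t by (simp add: abs_mult abs_minus_commute)
  moreover have "(q - 1) * min (m powr (q - 2)) (M powr (q - 2)) * \<bar>t - t\<^sub>0\<bar>
      \<le> \<bar>t powr (q - 1) - t\<^sub>0 powr (q - 1)\<bar>"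
    using powr_diff_lower_bound[of "q - 1" m t M t\<^sub>0] assms unfolding t\<^sub>0_def by simp
  then have "a * m * ((q - 1) * min (m powr (q - 2)) (M powr (q - 2)) * \<bar>t - t\<^sub>0\<bar>)
      \<le> a * t * \<bar>t powr (q - 1) - t\<^sub>0 powr (q - 1)\<bar>"
    using assms(1,2,3) t by (intro mult_mono) auto
  ultimately show ?thesis
    using assms(6) unfolding t\<^sub>0_def by (simp add: mult.assoc)
qed

text \<open>The constant is \<open>2 / (m c)\<close>, where \<open>c\<close> bounds the derivative of \<open>t powr (q - 1)\<close> from
  below on \<open>{m..delta_q q}\<close> and \<open>2\<close> bounds \<open>1/a\<close>.\<close>

definition critical_distance_const :: "real \<Rightarrow> real \<Rightarrow> real" where
  "critical_distance_const q m =
     2 / (m * ((q - 1) * min (m powr (q - 2)) (delta_q q powr (q - 2))))"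

lemma critical_distance_const_pos:
  assumes "q > 1" "m > 0"
  shows "critical_distance_const q m > 0"
  using assms delta_q_pos[of q] by (simp add: critical_distance_const_def)

lemma perturbed_near_critical_point_dist:
  fixes q a m \<xi> \<eta> t :: real
  assumes "q > 1" "a \<in> {1/2..1}" "0 < m" "m \<le> 1" "t \<in> {m..delta_q q}"
    and "\<bar>r' t\<bar> \<le> \<xi>" "\<bar>f_ar' q a r' t\<bar> \<le> \<eta>"
  shows "\<bar>t - a powr (-1 / (q - 1))\<bar> \<le> critical_distance_const q m * (\<xi> + \<eta>)"
proof -
  define t\<^sub>0 where "t\<^sub>0 = a powr (-1 / (q - 1))"
  define c where "c = (q - 1) * min (m powr (q - 2)) (delta_q q powr (q - 2))"
  have c_pos: "c > 0"
    using assms(1,3) delta_q_pos[of q] by (simp add: c_def)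
  have a: "a > 0" "1/2 \<le> a"
    using assms(2) by auto
  have "\<bar>t - a * t powr q\<bar> \<le> \<xi> + \<eta>"
    using assms(6,7) unfolding f_ar'_def by linarith
  then have "a * (m * c * \<bar>t - t\<^sub>0\<bar>) \<le> \<xi> + \<eta>"
    using near_critical_point[OF assms(1) a(1) assms(3,5)] critical_point_mem[OF assms(1,2)]
      assms(4) unfolding t\<^sub>0_def c_def by (simp add: mult.assoc)
  moreover have "(1/2) * (m * c * \<bar>t - t\<^sub>0\<bar>) \<le> a * (m * c * \<bar>t - t\<^sub>0\<bar>)"
    using a assms(3) c_pos by (intro mult_right_mono) auto
  ultimately have "m * c * \<bar>t - t\<^sub>0\<bar> \<le> 2 * (\<xi> + \<eta>)"
    by simp
  then show ?thesis
    unfolding t\<^sub>0_def critical_distance_const_def c_def[symmetric]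
    using assms(3) c_pos by (simp add: field_simps)
qed

lemma perturbed_near_critical_value:
  fixes q a m \<xi> \<eta> t :: real
  assumes "q > 1" "a \<in> {1/2..1}" "0 < m" "m \<le> 1" "t \<in> {m..delta_q q}"
    and "\<bar>r t\<bar> + \<bar>r' t\<bar> \<le> \<xi>" "\<bar>f_ar' q a r' t\<bar> \<le> \<eta>"
  shows "(1/2 - 1/(q + 1)) * (1/a) powr (2/(q - 1))
           - ((delta_q q + delta_q q powr q) * critical_distance_const q m + 1) * (\<xi> + \<eta>)
         \<le> f_ar q a r t"
proof -
  define t\<^sub>0 where "t\<^sub>0 = a powr (-1 / (q - 1))"
  define L where "L = delta_q q + delta_q q powr q"
  define K where "K = critical_distance_const q m"
  have dist: "\<bar>t - t\<^sub>0\<bar> \<le> K * (\<xi> + \<eta>)"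
    using perturbed_near_critical_point_dist[OF assms(1-5) _ assms(7)] assms(6)
    unfolding t\<^sub>0_def K_def by simp
  have "\<bar>f_ar q a (\<lambda>_. 0) t - f_ar q a (\<lambda>_. 0) t\<^sub>0\<bar> \<le> L * \<bar>t - t\<^sub>0\<bar>"
    using f_ar_unperturbed_lipschitz[of q a m t "delta_q q" t\<^sub>0] critical_point_mem[OF assms(1,2)]
      assms unfolding t\<^sub>0_def L_def by auto
  also have "\<dots> \<le> L * (K * (\<xi> + \<eta>))"
    using dist delta_q_pos[of q] assms(1) unfolding L_def by (intro mult_left_mono) auto
  finally have "\<bar>f_ar q a (\<lambda>_. 0) t - f_ar q a (\<lambda>_. 0) t\<^sub>0\<bar> \<le> L * K * (\<xi> + \<eta>)"
    by simp
  moreover have "f_ar q a r t = f_ar q a (\<lambda>_. 0) t + r t"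
    by (simp add: f_ar_def)
  moreover have "- (\<xi> + \<eta>) \<le> r t"
    using assms(6,7) by arith
  ultimately have "f_ar q a (\<lambda>_. 0) t\<^sub>0 - (L * K + 1) * (\<xi> + \<eta>) \<le> f_ar q a r t"
    by (simp add: algebra_simps abs_le_iff)
  then show ?thesis
    using assms(2) f_ar_unperturbed_at_critical_point(2)[OF assms(1)]
    unfolding t\<^sub>0_def L_def K_def by simp
qed

lemma near_critical_estimates_uniform:
  fixes q m :: real
  assumes "q > 1" "0 < m" "m \<le> 1"
  obtains C where "C > 0"
    and "\<And>a \<xi> \<eta> r r' t. a \<in> {1/2..1} \<Longrightarrow> t \<in> {m..delta_q q} \<Longrightarrow>
      \<bar>r t\<bar> + \<bar>r' t\<bar> \<le> \<xi> \<Longrightarrow> \<bar>f_ar' q a r' t\<bar> \<le> \<eta> \<Longrightarrow>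
      \<bar>t - a powr (-1 / (q - 1))\<bar> \<le> C * (\<xi> + \<eta>) \<and>
      (1/2 - 1/(q + 1)) * (1/a) powr (2/(q - 1)) - C * (\<xi> + \<eta>) \<le> f_ar q a r t"
proof -
  define K where "K = critical_distance_const q m"
  define L where "L = delta_q q + delta_q q powr q"
  have "K > 0" "L * K \<ge> 0"
    using critical_distance_const_pos[OF assms(1,2)] delta_q_pos[of q] assms(1)
    by (simp_all add: K_def L_def)
  then have C: "(1 + L) * K + 1 > 0" "K \<le> (1 + L) * K + 1" "L * K + 1 \<le> (1 + L) * K + 1"
    by (simp_all add: algebra_simps)
  show ?thesis
  proof (rule that[OF C(1)])
    fix a \<xi> \<eta> r r' t
    assume est: "a \<in> {1/2..1}" "t \<in> {m..delta_q q}"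
      "\<bar>r t\<bar> + \<bar>r' t\<bar> \<le> \<xi>" "\<bar>f_ar' q a r' t\<bar> \<le> \<eta>"
    then have r': "\<bar>r' t\<bar> \<le> \<xi>" and "\<xi> + \<eta> \<ge> 0"
      by linarith+
    then have "K * (\<xi> + \<eta>) \<le> ((1 + L) * K + 1) * (\<xi> + \<eta>)"
      "(L * K + 1) * (\<xi> + \<eta>) \<le> ((1 + L) * K + 1) * (\<xi> + \<eta>)"
      using C(2,3) by (simp_all add: mult_right_mono)
    with perturbed_near_critical_point_dist[OF assms(1) est(1) assms(2,3) est(2) r' est(4),
        folded K_def]
      perturbed_near_critical_value[where r = r and r' = r', OF assms(1) est(1) assms(2,3) est(2-4),
        folded K_def L_def]
    show "\<bar>t - a powr (-1 / (q - 1))\<bar> \<le> ((1 + L) * K + 1) * (\<xi> + \<eta>) \<and>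
      (1/2 - 1/(q + 1)) * (1/a) powr (2/(q - 1)) - ((1 + L) * K + 1) * (\<xi> + \<eta>) \<le> f_ar q a r t"
      by linarith
  qed
qed

lemma nonneg_outside_nhd_zero_ge:
  fixes W :: "real set"
  assumes "\<exists>U. open U \<and> 0 \<in> U \<and> U \<subseteq> W"
  obtains m where "0 < m" "m \<le> 1" "\<And>t. 0 \<le> t \<Longrightarrow> t \<notin> W \<Longrightarrow> m \<le> t"
proof -
  obtain U where "open U" "0 \<in> U" "U \<subseteq> W"
    using assms by blast
  then obtain e where "e > 0" "ball 0 e \<subseteq> W"
    by (meson open_contains_ball order_trans)
  then show ?thesis
    by (intro that[of "min e 1"]) (force simp: dist_real_def)+
qed

theorem lemma3p4:
  fixes q :: real and W :: "real set"
  assumes hq: "q > 1"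
    and hW: "\<exists>U. open U \<and> 0 \<in> U \<and> U \<subseteq> W"
  shows "\<exists>C6 C7. C6 > 0 \<and> C7 > 0 \<and>
    (\<forall>a \<xi> \<eta> (r :: real \<Rightarrow> real) (r' :: real \<Rightarrow> real).
       a \<in> {1/2..1} \<and> 0 < \<xi> \<and> \<xi> \<le> C6 \<and> 0 < \<eta> \<and> \<eta> \<le> C6 \<and>
       (\<forall>t \<in> {0..delta_q q}. (r has_real_derivative r' t) (at t within {0..delta_q q})) \<and>
       continuous_on {0..delta_q q} r' \<and>
       (\<forall>t \<in> {0..delta_q q}. \<bar>r t\<bar> + \<bar>r' t\<bar> \<le> \<xi>)
     \<longrightarrow>
       (\<forall>t \<in> {0..delta_q q} - W. \<bar>f_ar' q a r' t\<bar> \<le> \<eta> \<longrightarrow>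
           \<bar>t - a powr (-1 / (q - 1))\<bar> \<le> C7 * (\<xi> + \<eta>)) \<and>
       (\<forall>t \<in> {0..delta_q q} - W. \<bar>f_ar' q a r' t\<bar> \<le> \<eta> \<longrightarrow>
           f_ar q a r t \<ge> (1/2 - 1/(q+1)) * (1/a) powr (2/(q-1)) - C7 * (\<xi> + \<eta>)))"
proof -
  obtain m where m: "0 < m" "m \<le> 1" and far: "\<And>t. 0 \<le> t \<Longrightarrow> t \<notin> W \<Longrightarrow> m \<le> t"
    using nonneg_outside_nhd_zero_ge[OF hW] by blast
  obtain C where "C > 0"
    and estimates: "\<And>a \<xi> \<eta> r r' t. a \<in> {1/2..1} \<Longrightarrow> t \<in> {m..delta_q q} \<Longrightarrow>
      \<bar>r t\<bar> + \<bar>r' t\<bar> \<le> \<xi> \<Longrightarrow> \<bar>f_ar' q a r' t\<bar> \<le> \<eta> \<Longrightarrow>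
      \<bar>t - a powr (-1 / (q - 1))\<bar> \<le> C * (\<xi> + \<eta>) \<and>
      (1/2 - 1/(q + 1)) * (1/a) powr (2/(q - 1)) - C * (\<xi> + \<eta>) \<le> f_ar q a r t"
    using near_critical_estimates_uniform[OF hq m] by blast
  have "\<bar>t - a powr (-1 / (q - 1))\<bar> \<le> C * (\<xi> + \<eta>) \<and>
      (1/2 - 1/(q + 1)) * (1/a) powr (2/(q - 1)) - C * (\<xi> + \<eta>) \<le> f_ar q a r t"
    if "a \<in> {1/2..1}" "\<forall>t \<in> {0..delta_q q}. \<bar>r t\<bar> + \<bar>r' t\<bar> \<le> \<xi>"
      "t \<in> {0..delta_q q} - W" "\<bar>f_ar' q a r' t\<bar> \<le> \<eta>" for a \<xi> \<eta> r r' t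
    using that far by (intro estimates) auto
  then show ?thesis
    using \<open>C > 0\<close> by (intro exI[of _ 1] exI[of _ C]) auto
qed

end
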